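(* Let $u$ be a symmetric solution of $i u_t + u_{xx} + |u|^4u=0$ with $\|u_0\|_{L^2}=\|Q\|_{L^2}$, on its maximal interval of existence $I$. Then the function $$d(t) = \inf_{\lambda>0,\gamma\in\mathbb{R}} \|e^{i\gamma}\lambda^{1/2}u(t,\lambda x) - Q(x)\|_{L^2(\mathbb{R})}$$ is upper semicontinuous on $I$. Moreover, there exists $\delta>0$ such that $d$ is continuous at every $t\in I$ with $d(t)<\delta$.
   Context: $Q(x) = (3/\cosh^2(2x))^{1/4}$. Solutions are strong $L^2$ solutions (in $C_tL^2_x\cap L^4_{t,loc}L^\infty_x$). *)

theory Defs
  imports "HOL-Analysis.Analysis" "HOL-Probability.Essential_Supremum"
begin

definition Q :: "real \<Rightarrow> real" where
  "Q x = (3 / (cosh (2 * x))^2) powr (1/4)"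

text \<open>Iterated partial derivatives of a function of (t,x): True = d/dt, False = d/dx
  (the list is applied right-to-left).\<close>
fun pd :: "bool list \<Rightarrow> (real \<Rightarrow> real \<Rightarrow> complex) \<Rightarrow> real \<Rightarrow> real \<Rightarrow> complex" where
  "pd [] f = f"
| "pd (True # bs) f = (\<lambda>t x. vector_derivative (\<lambda>s. pd bs f s x) (at t))"
| "pd (False # bs) f = (\<lambda>t x. vector_derivative (\<lambda>y. pd bs f t y) (at x))"

definition smooth2 :: "(real \<Rightarrow> real \<Rightarrow> complex) \<Rightarrow> bool" where
  "smooth2 f \<longleftrightarrow> (\<forall>bs. continuous_on UNIV (\<lambda>p. pd bs f (fst p) (snd p)) \<and>
      (\<forall>t x. (\<lambda>s. pd bs f s x) differentiable (at t) \<and> (\<lambda>y. pd bs f t y) differentiable (at x)))"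

definition test_fun :: "real set \<Rightarrow> (real \<Rightarrow> real \<Rightarrow> complex) \<Rightarrow> bool" where
  "test_fun I \<phi> \<longleftrightarrow> smooth2 \<phi> \<and>
     (\<exists>K. compact K \<and> K \<subseteq> I \<times> UNIV \<and> (\<forall>p. p \<notin> K \<longrightarrow> \<phi> (fst p) (snd p) = 0))"

text \<open>u in C_t L^2_x (I x R) \<inter> L^4_{t,loc} L^infinity_x, solving
  i u_t + u_xx + |u|^4 u = 0 in the sense of distributions on I x R.\<close>
definition nls_solution :: "(real \<Rightarrow> real \<Rightarrow> complex) \<Rightarrow> real set \<Rightarrow> bool" where
  "nls_solution u I \<longleftrightarrow>
     (\<lambda>p. u (fst p) (snd p)) \<in> borel_measurable (restrict_space (lborel \<Otimes>\<^sub>M lborel) (I \<times> UNIV)) \<and>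
     (\<forall>t\<in>I. (\<lambda>x. u t x) \<in> borel_measurable lborel \<and> integrable lborel (\<lambda>x. (cmod (u t x))\<^sup>2)) \<and>
     (\<forall>t0\<in>I. ((\<lambda>t. LINT x|lborel. (cmod (u t x - u t0 x))\<^sup>2) \<longlongrightarrow> 0) (at t0 within I)) \<and>
     (\<forall>a b. {a..b} \<subseteq> I \<longrightarrow>
        (\<integral>\<^sup>+ t \<in> {a..b}. (esssup lborel (\<lambda>x. ennreal (cmod (u t x)))) ^ 4 \<partial>lborel) < \<infinity>) \<and>
     (\<forall>\<phi>. test_fun I \<phi> \<longrightarrow>
        (let F = (\<lambda>p. u (fst p) (snd p) *
                     (- \<i> * pd [True] \<phi> (fst p) (snd p) + pd [False, False] \<phi> (fst p) (snd p))
                   + complex_of_real ((cmod (u (fst p) (snd p))) ^ 4) * u (fst p) (snd p) * \<phi> (fst p) (snd p))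
         in integrable (lborel \<Otimes>\<^sub>M lborel) F \<and> integral\<^sup>L (lborel \<Otimes>\<^sub>M lborel) F = 0))"

definition maximal_nls_solution :: "(real \<Rightarrow> real \<Rightarrow> complex) \<Rightarrow> real set \<Rightarrow> bool" where
  "maximal_nls_solution u I \<longleftrightarrow> is_interval I \<and> open I \<and> 0 \<in> I \<and> nls_solution u I \<and>
     \<not> (\<exists>J v. is_interval J \<and> open J \<and> I \<subset> J \<and> nls_solution v J \<and>
              (\<forall>t\<in>I. AE x in lborel. v t x = u t x))"

definition dist_Q :: "(real \<Rightarrow> real \<Rightarrow> complex) \<Rightarrow> real \<Rightarrow> real" where
  "dist_Q u t = Inf {sqrt (LINT x|lborel.
       (cmod (exp (\<i> * complex_of_real g) * complex_of_real (sqrt lam) * u t (lam * x)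
              - complex_of_real (Q x)))\<^sup>2) | lam g. lam > 0}"

end

theory Submission
  imports Defs
begin

text \<open>The phase rotations and L^2-critical rescalings
  v \<mapsto> e^(i \<gamma>) \<lambda>^(1/2) v(\<lambda> x) are isometries of L^2, so d(t) is the distance from u(t)
  to a fixed set (the orbit of Q under their inverses) and depends 1-Lipschitz on u(t) in L^2.
  Since t \<mapsto> u(t) is continuous into L^2, d is continuous on all of I, which gives both claims.\<close>

definition L2_norm :: "'a measure \<Rightarrow> ('a \<Rightarrow> 'b::real_normed_vector) \<Rightarrow> real" where
  "L2_norm M f = sqrt (\<integral>x. (norm (f x))\<^sup>2 \<partial>M)"

definition orbit_L2_dist :: "(real \<Rightarrow> complex) \<Rightarrow> (real \<Rightarrow> complex) \<Rightarrow> real" where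
  "orbit_L2_dist q v = Inf {L2_norm lborel
       (\<lambda>x. exp (\<i> * complex_of_real g) * complex_of_real (sqrt lam) * v (lam * x) - q x) | lam g. lam > 0}"

lemma dist_Q_eq_orbit_L2_dist: "dist_Q u t = orbit_L2_dist (\<lambda>x. complex_of_real (Q x)) (u t)"
  unfolding dist_Q_def orbit_L2_dist_def L2_norm_def by simp

lemma norm_add_squared_le_weighted:
  fixes a b :: "'a::real_normed_vector"
  assumes "t > 0"
  shows "(norm (a + b))\<^sup>2 \<le> (1 + t) * (norm a)\<^sup>2 + (1 + 1 / t) * (norm b)\<^sup>2"
proof -
  have "(norm (a + b))\<^sup>2 \<le> (norm a + norm b)\<^sup>2"
    by (simp add: norm_triangle_ineq power_mono)
  moreover have "0 \<le> (t * norm a - norm b)\<^sup>2 / t"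
    using assms by simp
  then have "2 * norm a * norm b \<le> t * (norm a)\<^sup>2 + (norm b)\<^sup>2 / t"
    using assms by (simp add: field_simps power2_eq_square)
  ultimately show ?thesis
    by (simp add: power2_sum algebra_simps)
qed

lemma le_sqrt_add_sqrt_squared:
  fixes X A B :: real
  assumes "A \<ge> 0" "B \<ge> 0" and bound: "\<And>t. t > 0 \<Longrightarrow> X \<le> (1 + t) * A + (1 + 1 / t) * B"
  shows "X \<le> (sqrt A + sqrt B)\<^sup>2"
proof -
  consider "A > 0" "B > 0" | "A = 0" | "B = 0"
    using assms(1,2) by linarith
  then show ?thesis
  proof cases
    case 1
    have "(1 + sqrt B / sqrt A) * A + (1 + 1 / (sqrt B / sqrt A)) * B = (sqrt A + sqrt B)\<^sup>2"
      using 1 by (simp add: field_simps power2_eq_square)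
    then show ?thesis
      using bound[of "sqrt B / sqrt A"] 1 by simp
  next
    case 2
    have "((\<lambda>t. B + B / t) \<longlongrightarrow> B + 0) at_top"
      by (intro tendsto_add tendsto_const tendsto_divide_0[OF tendsto_const]
          filterlim_at_top_imp_at_infinity filterlim_ident)
    moreover have "\<forall>\<^sub>F t in at_top. X \<le> B + B / t"
      using 2 bound by (auto simp: eventually_at_top_dense algebra_simps)
    ultimately have "X \<le> B"
      using tendsto_lowerbound by fastforce
    then show ?thesis
      using 2 assms(2) by simp
  next
    case 3
    have "((\<lambda>t. (1 + t) * A) \<longlongrightarrow> (1 + 0) * A) (at_right 0)"
      by (intro tendsto_intros)
    moreover have "\<forall>\<^sub>F t in at_right 0. X \<le> (1 + t) * A"
      by (rule eventually_mono[OF eventually_at_right_less]) (use 3 bound in simp)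
    ultimately have "X \<le> A"
      using tendsto_lowerbound by fastforce
    then show ?thesis
      using 3 assms(1) by simp
  qed
qed

lemma square_integrable_add:
  fixes f h :: "'a \<Rightarrow> 'b::{real_normed_vector, second_countable_topology}"
  assumes [measurable]: "f \<in> borel_measurable M" "h \<in> borel_measurable M"
    and "integrable M (\<lambda>x. (norm (f x))\<^sup>2)" "integrable M (\<lambda>x. (norm (h x))\<^sup>2)"
  shows "integrable M (\<lambda>x. (norm (f x + h x))\<^sup>2)"
proof (rule Bochner_Integration.integrable_bound)
  show "integrable M (\<lambda>x. 2 * (norm (f x))\<^sup>2 + 2 * (norm (h x))\<^sup>2)"
    using assms(3,4) by simp
  show "AE x in M. norm ((norm (f x + h x))\<^sup>2) \<le> norm (2 * (norm (f x))\<^sup>2 + 2 * (norm (h x))\<^sup>2)"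
    by (intro AE_I2) (use norm_add_squared_le_weighted[of 1] in simp)
qed simp

lemma L2_norm_triangle:
  fixes f h :: "'a \<Rightarrow> 'b::{real_normed_vector, second_countable_topology}"
  assumes [measurable]: "f \<in> borel_measurable M" "h \<in> borel_measurable M"
    and h_sq: "integrable M (\<lambda>x. (norm (h x))\<^sup>2)"
  shows "L2_norm M (\<lambda>x. f x + h x) \<le> L2_norm M f + L2_norm M h"
proof (cases "integrable M (\<lambda>x. (norm (f x))\<^sup>2)")
  case True
  define A where "A = (\<integral>x. (norm (f x))\<^sup>2 \<partial>M)"
  define B where "B = (\<integral>x. (norm (h x))\<^sup>2 \<partial>M)"
  have "(\<integral>x. (norm (f x + h x))\<^sup>2 \<partial>M) \<le> (sqrt A + sqrt B)\<^sup>2"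
  proof (rule le_sqrt_add_sqrt_squared)
    fix t :: real
    assume "t > 0"
    then have "(\<integral>x. (norm (f x + h x))\<^sup>2 \<partial>M)
        \<le> (\<integral>x. (1 + t) * (norm (f x))\<^sup>2 + (1 + 1 / t) * (norm (h x))\<^sup>2 \<partial>M)"
      using True h_sq square_integrable_add[OF assms(1,2) True h_sq]
      by (intro integral_mono) (simp_all add: norm_add_squared_le_weighted)
    also have "\<dots> = (1 + t) * A + (1 + 1 / t) * B"
      using True h_sq unfolding A_def B_def by simp
    finally show "(\<integral>x. (norm (f x + h x))\<^sup>2 \<partial>M) \<le> (1 + t) * A + (1 + 1 / t) * B" .
  qed (simp_all add: A_def B_def)
  then show ?thesis
    unfolding L2_norm_def A_def B_def by (simp add: real_le_lsqrt)
next
  case False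
  \<comment> \<open>Then f + h is not square integrable either, and the junk value 0 of its integral makes
    the left-hand side vanish.\<close>
  have "\<not> integrable M (\<lambda>x. (norm (f x + h x))\<^sup>2)"
    using square_integrable_add[of "\<lambda>x. f x + h x" M "\<lambda>x. - h x"] h_sq False by auto
  then show ?thesis
    by (simp add: L2_norm_def not_integrable_integral_eq)
qed

lemma square_integrable_rescale_iff:
  fixes v :: "real \<Rightarrow> 'b::real_normed_div_algebra"
  assumes "lam > 0" "norm c = sqrt lam"
  shows "integrable lborel (\<lambda>x. (norm (c * v (lam * x)))\<^sup>2) \<longleftrightarrow> integrable lborel (\<lambda>x. (norm (v x))\<^sup>2)"
proof -
  have "(\<lambda>x. (norm (c * v (lam * x)))\<^sup>2) = (\<lambda>x. lam * (norm (v (0 + lam * x)))\<^sup>2)"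
    using assms by (simp add: norm_mult power_mult_distrib)
  then show ?thesis
    using assms lborel_integrable_real_affine_iff[of lam "\<lambda>x. (norm (v x))\<^sup>2" 0] by simp
qed

lemma L2_norm_rescale:
  fixes v :: "real \<Rightarrow> 'b::real_normed_div_algebra"
  assumes "lam > 0" "norm c = sqrt lam"
  shows "L2_norm lborel (\<lambda>x. c * v (lam * x)) = L2_norm lborel v"
proof -
  have "(\<lambda>x. (norm (c * v (lam * x)))\<^sup>2) = (\<lambda>x. lam * (norm (v (0 + lam * x)))\<^sup>2)"
    using assms by (simp add: norm_mult power_mult_distrib)
  then show ?thesis
    using assms lborel_integral_real_affine[of lam "\<lambda>x. (norm (v x))\<^sup>2" 0]
    by (simp add: L2_norm_def)
qed

lemma orbit_L2_dist_le:
  fixes q v w :: "real \<Rightarrow> complex"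
  assumes [measurable]: "q \<in> borel_measurable lborel" "v \<in> borel_measurable lborel"
      "w \<in> borel_measurable lborel"
    and v_sq: "integrable lborel (\<lambda>x. (cmod (v x))\<^sup>2)"
    and w_sq: "integrable lborel (\<lambda>x. (cmod (w x))\<^sup>2)"
  shows "orbit_L2_dist q v \<le> orbit_L2_dist q w + L2_norm lborel (\<lambda>x. v x - w x)"
proof -
  define S where "S z = {L2_norm lborel
       (\<lambda>x. exp (\<i> * complex_of_real g) * complex_of_real (sqrt lam) * z (lam * x) - q x) | lam g. lam > 0}"
    for z :: "real \<Rightarrow> complex"
  have orbit_L2_dist_eq: "orbit_L2_dist q z = Inf (S z)" for z
    unfolding orbit_L2_dist_def S_def ..
  define N where "N = L2_norm lborel (\<lambda>x. v x - w x)"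
  have orbit_element_le: "orbit_L2_dist q v \<le> L2_norm lborel (\<lambda>x. c * w (lam * x) - q x) + N"
    if "lam > 0" and c: "c = exp (\<i> * complex_of_real g) * complex_of_real (sqrt lam)" for lam g c
  proof -
    have norm_c: "cmod c = sqrt lam"
      using \<open>lam > 0\<close> by (simp add: c norm_mult)
    have [measurable]: "(\<lambda>x. z (lam * x)) \<in> borel_measurable lborel"
      if "z \<in> borel_measurable lborel" for z :: "real \<Rightarrow> complex"
      using measurable_compose[OF _ that, of "\<lambda>x. lam * x" lborel] by simp
    have "integrable lborel (\<lambda>x. (cmod (v x - w x))\<^sup>2)"
      using square_integrable_add[of v lborel "\<lambda>x. - w x"] v_sq w_sq by simp
    then have h_sq: "integrable lborel (\<lambda>x. (cmod (c * (v (lam * x) - w (lam * x))))\<^sup>2)"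
      using square_integrable_rescale_iff[OF \<open>lam > 0\<close> norm_c, of "\<lambda>x. v x - w x"] by simp
    have "L2_norm lborel (\<lambda>x. (c * w (lam * x) - q x) + c * (v (lam * x) - w (lam * x)))
        \<le> L2_norm lborel (\<lambda>x. c * w (lam * x) - q x)
          + L2_norm lborel (\<lambda>x. c * (v (lam * x) - w (lam * x)))"
      by (rule L2_norm_triangle) (measurable, measurable, rule h_sq)
    also have "L2_norm lborel (\<lambda>x. c * (v (lam * x) - w (lam * x))) = N"
      unfolding N_def by (rule L2_norm_rescale[OF \<open>lam > 0\<close> norm_c])
    finally have "L2_norm lborel (\<lambda>x. (c * w (lam * x) - q x) + c * (v (lam * x) - w (lam * x)))
        \<le> L2_norm lborel (\<lambda>x. c * w (lam * x) - q x) + N" .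
    moreover have "orbit_L2_dist q v
        \<le> L2_norm lborel (\<lambda>x. (c * w (lam * x) - q x) + c * (v (lam * x) - w (lam * x)))"
      unfolding orbit_L2_dist_eq
    proof (rule cInf_lower)
      show "L2_norm lborel (\<lambda>x. (c * w (lam * x) - q x) + c * (v (lam * x) - w (lam * x))) \<in> S v"
        unfolding S_def
        by (intro CollectI exI[of _ lam] exI[of _ g]) (simp add: \<open>lam > 0\<close> c algebra_simps)
      show "bdd_below (S v)"
        by (rule bdd_belowI[of _ 0]) (auto simp: S_def L2_norm_def)
    qed
    ultimately show ?thesis
      by linarith
  qed
  have "orbit_L2_dist q v - N \<le> Inf (S w)"
  proof (rule cInf_greatest)
    show "S w \<noteq> {}"
      unfolding S_def using zero_less_one by blast
  next
    fix y
    assume "y \<in> S w"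
    then obtain lam g where "lam > 0" and y: "y = L2_norm lborel
        (\<lambda>x. exp (\<i> * complex_of_real g) * complex_of_real (sqrt lam) * w (lam * x) - q x)"
      unfolding S_def by blast
    then show "orbit_L2_dist q v - N \<le> y"
      using orbit_element_le[where g = g, OF \<open>lam > 0\<close> refl] by linarith
  qed
  then show ?thesis
    unfolding orbit_L2_dist_eq N_def by simp
qed

lemma borel_measurable_Q [measurable]: "Q \<in> borel_measurable borel"
  unfolding Q_def by (intro borel_measurable_continuous_onI continuous_intros) auto

lemma abs_dist_Q_diff_le:
  assumes [measurable]: "(\<lambda>x. u s x) \<in> borel_measurable lborel" "(\<lambda>x. u t x) \<in> borel_measurable lborel"
    and "integrable lborel (\<lambda>x. (cmod (u s x))\<^sup>2)" "integrable lborel (\<lambda>x. (cmod (u t x))\<^sup>2)"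
  shows "\<bar>dist_Q u s - dist_Q u t\<bar> \<le> L2_norm lborel (\<lambda>x. u s x - u t x)"
proof -
  have "L2_norm lborel (\<lambda>x. u t x - u s x) = L2_norm lborel (\<lambda>x. u s x - u t x)"
    by (simp add: L2_norm_def norm_minus_commute)
  then show ?thesis
    using orbit_L2_dist_le[of "\<lambda>x. complex_of_real (Q x)" "u s" "u t"]
      orbit_L2_dist_le[of "\<lambda>x. complex_of_real (Q x)" "u t" "u s"] assms
    unfolding dist_Q_eq_orbit_L2_dist by fastforce
qed

lemma continuous_dist_Q:
  assumes sol: "nls_solution u I" and "t \<in> I"
  shows "continuous (at t within I) (dist_Q u)"
proof -
  have "((\<lambda>s. \<integral>x. (cmod (u s x - u t x))\<^sup>2 \<partial>lborel) \<longlongrightarrow> 0) (at t within I)"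
    using sol \<open>t \<in> I\<close> unfolding nls_solution_def by blast
  then have "((\<lambda>s. L2_norm lborel (\<lambda>x. u s x - u t x)) \<longlongrightarrow> 0) (at t within I)"
    unfolding L2_norm_def using tendsto_real_sqrt by fastforce
  moreover have "\<forall>\<^sub>F s in at t within I.
      norm (dist_Q u s - dist_Q u t) \<le> L2_norm lborel (\<lambda>x. u s x - u t x)"
    using sol \<open>t \<in> I\<close> unfolding eventually_at_filter nls_solution_def
    by (intro always_eventually allI impI) (simp add: abs_dist_Q_diff_le)
  ultimately have "((\<lambda>s. dist_Q u s - dist_Q u t) \<longlongrightarrow> 0) (at t within I)"
    by (rule Lim_null_comparison[rotated])
  then show ?thesis
    unfolding continuous_within by (rule LIM_zero_cancel)
qed

theorem theorem2p4:
  fixes u :: "real \<Rightarrow> real \<Rightarrow> complex" and I :: "real set"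
  assumes max: "maximal_nls_solution u I"
    and symm: "\<forall>t\<in>I. AE x in lborel. u t (- x) = u t x"
    and mass: "(LINT x|lborel. (cmod (u 0 x))\<^sup>2) = (LINT x|lborel. (Q x)\<^sup>2)"
  shows "(\<forall>t\<in>I. \<forall>e>0. \<forall>\<^sub>F s in at t within I. dist_Q u s < dist_Q u t + e) \<and>
         (\<exists>\<delta>>0. \<forall>t\<in>I. dist_Q u t < \<delta> \<longrightarrow> continuous (at t within I) (dist_Q u))"
proof -
  have cont: "continuous (at t within I) (dist_Q u)" if "t \<in> I" for t
    using max that unfolding maximal_nls_solution_def by (simp add: continuous_dist_Q)
  have "\<forall>\<^sub>F s in at t within I. dist_Q u s < dist_Q u t + e" if "t \<in> I" "e > 0" for t e
    using cont[OF \<open>t \<in> I\<close>] \<open>e > 0\<close> unfolding continuous_within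
    by (elim order_tendstoD) simp
  moreover have "\<exists>\<delta>>0. \<forall>t\<in>I. dist_Q u t < \<delta> \<longrightarrow> continuous (at t within I) (dist_Q u)"
    using cont zero_less_one by blast
  ultimately show ?thesis
    by blast
qed

end
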